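(* Let $Q_0$ be the unit cube in $\mathbb R^d$ and $f\in C(Q_0)$. There is $N_0=N_0(d)$ such that the following holds. Let $Q\subset Q_0$ be a cube partitioned into $K^d$ equal cubes $q_i$, $K\ge 8$, with $2q_i\subset Q_0$ for all $i$, and put $N_{\min}=\min_i N_f(q_i)$. If $N_{\min}\ge N_0(d)$, then \[N_f(Q/2)\ge \frac K8 N_{\min}.\]
   Context: For a cube $q$ and $t>0$, $tq$ is the concentric cube with side length multiplied by $t$. For a cube $q$ with $2q\subset Q_0$, $N_f(q)=\log\frac{\max_{2q}|f|}{\max_q|f|}$. *)

theory Defs
  imports "HOL-Analysis.Analysis"
begin

text \<open>Closed axis-parallel cube with center c and side length s.
  Then t q (concentric, side multiplied by t) is cube c (t * s).\<close>
definition cube :: "'a::euclidean_space \<Rightarrow> real \<Rightarrow> 'a set" where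
  "cube c s = cbox (c - (s/2) *\<^sub>R One) (c + (s/2) *\<^sub>R One)"

definition unit_cube :: "'a::euclidean_space set" where
  "unit_cube = cbox 0 One"

text \<open>max over S of |f| (a maximum when S is compact and f continuous).\<close>
definition maxabs :: "('a \<Rightarrow> real) \<Rightarrow> 'a set \<Rightarrow> real" where
  "maxabs f S = Sup ((\<lambda>x. \<bar>f x\<bar>) ` S)"

definition doubling_index :: "('a::euclidean_space \<Rightarrow> real) \<Rightarrow> 'a \<Rightarrow> real \<Rightarrow> real" where
  "doubling_index f c s = ln (maxabs f (cube c (2 * s)) / maxabs f (cube c s))"

text \<open>Centers of the K^d equal subcubes (side s/K) partitioning cube c s.\<close>
definition subcube_centers :: "'a::euclidean_space \<Rightarrow> real \<Rightarrow> nat \<Rightarrow> 'a set" where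
  "subcube_centers c s K =
     {c + (\<Sum>b\<in>Basis. ((real (j b) + 1/2) * (s / real K) - s/2) *\<^sub>R b) | j :: 'a \<Rightarrow> nat.
        \<forall>b\<in>Basis. j b < K}"

end

theory Submission
  imports Defs
begin

text \<open>Take a point \<open>x\<close> of \<open>Q/2\<close> where \<open>|f|\<close> is maximal. If \<open>x\<close> lies in the subcube \<open>q\<close>,
  then \<open>2q\<close> contains a point where \<open>|f|\<close> is at least \<open>exp N\<^sub>m\<^sub>i\<^sub>n \<cdot> |f x|\<close>, and that point
  lies at most one layer of subcubes closer to the boundary of \<open>Q\<close> than \<open>q\<close>. As \<open>Q/2\<close> lies
  about \<open>K/4\<close> layers deep inside \<open>Q\<close>, the step can be repeated \<open>\<lceil>K/8\<rceil>\<close> times without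
  leaving \<open>Q\<close>, whence \<open>max\<^sub>Q |f| \<ge> exp (K/8 \<cdot> N\<^sub>m\<^sub>i\<^sub>n) \<cdot> max\<^sub>Q\<^sub>/\<^sub>2 |f|\<close>.\<close>

lemma mem_cube: "y \<in> cube p r \<longleftrightarrow> (\<forall>b\<in>Basis. \<bar>y \<bullet> b - p \<bullet> b\<bar> \<le> r / 2)"
proof -
  have "(p - (r / 2) *\<^sub>R One) \<bullet> b = p \<bullet> b - r / 2" "(p + (r / 2) *\<^sub>R One) \<bullet> b = p \<bullet> b + r / 2"
    if "b \<in> Basis" for b
    using that by (simp_all add: inner_diff_left inner_add_left)
  then show ?thesis
    unfolding cube_def mem_box abs_le_iff by force
qed

lemma compact_cube: "compact (cube p r)"
  unfolding cube_def by simp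

lemma center_mem_cube: "r \<ge> 0 \<Longrightarrow> p \<in> cube p r"
  by (simp add: mem_cube)

lemma cube_subset_cube: "r \<le> r' \<Longrightarrow> cube p r \<subseteq> cube p r'"
  by (fastforce simp: mem_cube)

lemma bdd_above_abs_image:
  "compact S \<Longrightarrow> continuous_on S f \<Longrightarrow> bdd_above ((\<lambda>x. \<bar>f x :: real\<bar>) ` S)"
  by (intro bounded_imp_bdd_above compact_imp_bounded compact_continuous_image continuous_intros)

lemma abs_le_maxabs: "compact S \<Longrightarrow> continuous_on S f \<Longrightarrow> x \<in> S \<Longrightarrow> \<bar>f x\<bar> \<le> maxabs f S"
  unfolding maxabs_def by (rule cSup_upper) (auto intro: bdd_above_abs_image)

lemma maxabs_attained:
  assumes "compact S" "S \<noteq> {}" "continuous_on S f"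
  shows "\<exists>x\<in>S. \<bar>f x\<bar> = maxabs f S"
proof -
  have "continuous_on S (\<lambda>x. \<bar>f x\<bar>)"
    using assms(3) by (rule continuous_on_rabs)
  then obtain x where x: "x \<in> S" "\<forall>y\<in>S. \<bar>f y\<bar> \<le> \<bar>f x\<bar>"
    using continuous_attains_sup[OF assms(1,2)] by blast
  then have "maxabs f S = \<bar>f x\<bar>"
    unfolding maxabs_def by (intro cSup_eq_maximum) auto
  with x show ?thesis by auto
qed

lemma maxabs_mono:
  "compact T \<Longrightarrow> continuous_on T f \<Longrightarrow> S \<subseteq> T \<Longrightarrow> S \<noteq> {} \<Longrightarrow> maxabs f S \<le> maxabs f T"
  unfolding maxabs_def by (intro cSup_subset_mono bdd_above_abs_image) auto

lemma le_ln_div_iff: "0 < (M :: real) \<Longrightarrow> 0 < L \<Longrightarrow> a \<le> ln (L / M) \<longleftrightarrow> exp a * M \<le> L"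
  using ln_ge_iff[of "L / M" a] by (simp add: pos_le_divide_eq)

lemma doubling_index_growth:
  assumes cont: "continuous_on (cube p (2 * r)) f" and r: "r \<ge> 0"
    and pos: "maxabs f (cube p r) > 0" and N: "N \<le> doubling_index f p r"
    and y: "y \<in> cube p r"
  shows "\<exists>y'\<in>cube p (2 * r). exp N * \<bar>f y\<bar> \<le> \<bar>f y'\<bar>"
proof -
  have sub: "cube p r \<subseteq> cube p (2 * r)"
    using r by (intro cube_subset_cube) simp
  have "cube p (2 * r) \<noteq> {}"
    using center_mem_cube[of "2 * r" p] r by auto
  then obtain y' where y': "y' \<in> cube p (2 * r)" "\<bar>f y'\<bar> = maxabs f (cube p (2 * r))"
    using maxabs_attained[OF compact_cube _ cont] by blast
  have "maxabs f (cube p r) \<le> maxabs f (cube p (2 * r))"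
    using maxabs_mono[OF compact_cube cont sub] y by blast
  with pos N have "exp N * maxabs f (cube p r) \<le> maxabs f (cube p (2 * r))"
    unfolding doubling_index_def by (subst le_ln_div_iff[symmetric]) auto
  moreover have "\<bar>f y\<bar> \<le> maxabs f (cube p r)"
    using abs_le_maxabs[OF compact_cube continuous_on_subset[OF cont sub] y] .
  ultimately have "exp N * \<bar>f y\<bar> \<le> \<bar>f y'\<bar>"
    using y'(2) by (smt (verit) exp_gt_zero mult_left_mono)
  with y'(1) show ?thesis by blast
qed

text \<open>Coordinates measured in subcube side lengths from the corner \<open>c - (s/2) One\<close> of \<open>Q\<close>:
  \<open>Q\<close> is \<open>[0, K]\<^sup>d\<close> and the subcubes are the unit cubes with integer corners.\<close>
definition grid_coord :: "'a::euclidean_space \<Rightarrow> real \<Rightarrow> nat \<Rightarrow> 'a \<Rightarrow> 'a \<Rightarrow> real" where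
  "grid_coord c s K y b = (y \<bullet> b - c \<bullet> b) / (s / real K) + real K / 2"

definition grid_core :: "'a::euclidean_space \<Rightarrow> real \<Rightarrow> nat \<Rightarrow> nat \<Rightarrow> 'a set" where
  "grid_core c s K m =
     {y. \<forall>b\<in>Basis. real m \<le> grid_coord c s K y b \<and> grid_coord c s K y b < real K - real m}"

lemma grid_coord_self: "grid_coord c s K c b = real K / 2"
  by (simp add: grid_coord_def)

lemma mem_cube_iff_grid_coord:
  assumes "s > 0" "K > 0" "r * real K = 2 * s * t"
  shows "z \<in> cube p r \<longleftrightarrow>
    (\<forall>b\<in>Basis. \<bar>grid_coord c s K z b - grid_coord c s K p b\<bar> \<le> t)"
proof -
  have "grid_coord c s K z b - grid_coord c s K p b = (z \<bullet> b - p \<bullet> b) / (s / real K)" for b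
    unfolding grid_coord_def by (simp add: diff_divide_distrib[symmetric] algebra_simps)
  moreover have "\<bar>x / (s / real K)\<bar> \<le> t \<longleftrightarrow> \<bar>x\<bar> \<le> r / 2" for x
  proof -
    have "\<bar>x / (s / real K)\<bar> = \<bar>x\<bar> * real K / s"
      using assms(1,2) by (simp add: abs_divide abs_mult)
    moreover have "\<bar>x\<bar> * real K / s \<le> t \<longleftrightarrow> \<bar>x\<bar> * real K \<le> r / 2 * real K"
      using assms by (simp add: pos_divide_le_eq algebra_simps)
    ultimately show ?thesis
      using assms(2) by simp
  qed
  ultimately show ?thesis
    unfolding mem_cube by simp
qed

lemma subcube_containing:
  fixes c y :: "'a::euclidean_space"
  assumes s: "s > 0" and K: "K > 0"
    and y: "\<forall>b\<in>Basis. 0 \<le> grid_coord c s K y b \<and> grid_coord c s K y b < real K"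
  shows "\<exists>p\<in>subcube_centers c s K.
    \<forall>b\<in>Basis. grid_coord c s K p b = \<lfloor>grid_coord c s K y b\<rfloor> + 1 / 2"
proof -
  define j where "j b = nat \<lfloor>grid_coord c s K y b\<rfloor>" for b
  define p where "p = c + (\<Sum>b\<in>Basis. ((real (j b) + 1/2) * (s / real K) - s/2) *\<^sub>R b)"
  have j: "\<forall>b\<in>Basis. j b < K"
    using y unfolding j_def by (simp add: nat_less_iff floor_less_iff)
  then have "p \<in> subcube_centers c s K"
    unfolding subcube_centers_def p_def by blast
  moreover have "grid_coord c s K p b = \<lfloor>grid_coord c s K y b\<rfloor> + 1 / 2" if b: "b \<in> Basis" for b
  proof -
    have "p \<bullet> b - c \<bullet> b = (real (j b) + 1/2) * (s / real K) - s/2"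
      using b unfolding p_def by (simp add: inner_add_left inner_sum_left inner_Basis if_distrib
          sum.delta cong: if_cong)
    moreover have "real (j b) = \<lfloor>grid_coord c s K y b\<rfloor>"
      using y b unfolding j_def by simp
    ultimately show ?thesis
      using s K unfolding grid_coord_def by (simp add: field_simps)
  qed
  ultimately show ?thesis by blast
qed

lemma grid_core_0_subset_cube:
  assumes "s > 0" "K > 0"
  shows "grid_core c s K 0 \<subseteq> cube c s"
proof
  fix y assume "y \<in> grid_core c s K 0"
  then have "\<forall>b\<in>Basis. \<bar>grid_coord c s K y b - grid_coord c s K c b\<bar> \<le> real K / 2"
    unfolding grid_core_def grid_coord_self abs_le_iff by force
  moreover have "s * real K = 2 * s * (real K / 2)"
    by simp
  ultimately show "y \<in> cube c s"
    using mem_cube_iff_grid_coord[OF assms] by blast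
qed

lemma half_cube_subset_grid_core:
  assumes "s > 0" "K > 0" "real m < real K / 4"
  shows "cube c (s / 2) \<subseteq> grid_core c s K m"
proof
  fix y assume "y \<in> cube c (s / 2)"
  moreover have "s / 2 * real K = 2 * s * (real K / 4)"
    by simp
  ultimately have "\<forall>b\<in>Basis. \<bar>grid_coord c s K y b - grid_coord c s K c b\<bar> \<le> real K / 4"
    using mem_cube_iff_grid_coord[OF assms(1,2)] by blast
  with assms(3) show "y \<in> grid_core c s K m"
    unfolding grid_core_def grid_coord_self abs_le_iff by fastforce
qed

lemma subcube_in_half_cube:
  fixes c :: "'a::euclidean_space"
  assumes s: "s > 0" and K: "K \<ge> 4"
  shows "\<exists>p\<in>subcube_centers c s K. cube p (s / real K) \<subseteq> cube c (s / 2)"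
proof -
  have K0: "K > 0" using K by simp
  have "\<forall>b\<in>Basis. 0 \<le> grid_coord c s K c b \<and> grid_coord c s K c b < real K"
    using K0 by (simp add: grid_coord_self)
  from subcube_containing[OF s K0 this] obtain p where p: "p \<in> subcube_centers c s K"
    "\<forall>b\<in>Basis. grid_coord c s K p b = \<lfloor>real K / 2\<rfloor> + 1 / 2"
    unfolding grid_coord_self by blast
  have "\<bar>grid_coord c s K z b - grid_coord c s K c b\<bar> \<le> real K / 4"
    if "b \<in> Basis" "\<bar>grid_coord c s K z b - grid_coord c s K p b\<bar> \<le> 1 / 2" for z b
  proof -
    have "real K / 2 - 1 < \<lfloor>real K / 2\<rfloor>" "\<lfloor>real K / 2\<rfloor> \<le> real K / 2" "real K \<ge> 4"
      using K by linarith+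
    moreover have "grid_coord c s K p b = \<lfloor>real K / 2\<rfloor> + 1 / 2"
      using p(2) that(1) by blast
    ultimately show ?thesis
      using that(2) unfolding grid_coord_self abs_le_iff by linarith
  qed
  moreover have "s / real K * real K = 2 * s * (1 / 2)" "s / 2 * real K = 2 * s * (real K / 4)"
    using K0 by simp_all
  ultimately have "cube p (s / real K) \<subseteq> cube c (s / 2)"
    using mem_cube_iff_grid_coord[OF s K0] by blast
  with p(1) show ?thesis by blast
qed

lemma finite_subcube_centers: "finite (subcube_centers (c::'a::euclidean_space) s K)"
proof -
  let ?center = "\<lambda>j. c + (\<Sum>b\<in>Basis. ((real (j b) + 1/2) * (s / real K) - s/2) *\<^sub>R b)"
  have "subcube_centers c s K \<subseteq> ?center ` (\<Pi>\<^sub>E b\<in>Basis. {..<K})"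
  proof
    fix p assume "p \<in> subcube_centers c s K"
    then obtain j where j: "\<forall>b\<in>Basis. j b < K" "p = ?center j"
      unfolding subcube_centers_def by auto
    then have "p = ?center (restrict j Basis)" "restrict j Basis \<in> (\<Pi>\<^sub>E b\<in>Basis. {..<K})"
      by auto
    then show "p \<in> ?center ` (\<Pi>\<^sub>E b\<in>Basis. {..<K})" by blast
  qed
  then show ?thesis
    by (rule finite_subset) (intro finite_imageI finite_PiE; simp)
qed

locale subcube_doubling =
  fixes f :: "'a::euclidean_space \<Rightarrow> real" and c :: 'a and s :: real and K :: nat and N :: real
  assumes continuous: "continuous_on unit_cube f" and s_pos: "s > 0" and K_pos: "K > 0"
    and double_subcubes: "\<forall>p\<in>subcube_centers c s K. cube p (2 * (s / real K)) \<subseteq> unit_cube"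
    and maxabs_pos: "\<forall>p\<in>subcube_centers c s K. maxabs f (cube p (s / real K)) > 0"
    and doubling_ge: "\<forall>p\<in>subcube_centers c s K. N \<le> doubling_index f p (s / real K)"
begin

lemma grow_into_grid_core:
  assumes y: "y \<in> grid_core c s K (Suc m)"
  shows "\<exists>y'\<in>grid_core c s K m. exp N * \<bar>f y\<bar> \<le> \<bar>f y'\<bar>"
proof -
  let ?g = "grid_coord c s K"
  have h: "s / real K > 0" using s_pos K_pos by simp
  have yb: "real m + 1 \<le> ?g y b" "?g y b < real K - real m - 1" if "b \<in> Basis" for b
    using y that unfolding grid_core_def by auto
  obtain p where p: "p \<in> subcube_centers c s K" "\<forall>b\<in>Basis. ?g p b = \<lfloor>?g y b\<rfloor> + 1 / 2"
    using subcube_containing[OF s_pos K_pos, of c y] yb by fastforce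
  have "\<bar>?g y b - ?g p b\<bar> \<le> 1 / 2" if "b \<in> Basis" for b
    using p(2) that unfolding abs_le_iff by auto linarith+
  moreover have "s / real K * real K = 2 * s * (1 / 2)"
    using K_pos by simp
  ultimately have "y \<in> cube p (s / real K)"
    using mem_cube_iff_grid_coord[OF s_pos K_pos] by blast
  then obtain y' where y': "y' \<in> cube p (2 * (s / real K))" "exp N * \<bar>f y\<bar> \<le> \<bar>f y'\<bar>"
    using doubling_index_growth[OF continuous_on_subset[OF continuous] _ _ doubling_ge[rule_format]]
      double_subcubes maxabs_pos p(1) h by (metis less_imp_le)
  have "2 * (s / real K) * real K = 2 * s * 1"
    using K_pos by simp
  with y'(1) have "\<bar>?g y' b - ?g p b\<bar> \<le> 1" if "b \<in> Basis" for b
    using mem_cube_iff_grid_coord[OF s_pos K_pos] that by blast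
  moreover have "real m + 1 \<le> \<lfloor>?g y b\<rfloor>" "\<lfloor>?g y b\<rfloor> \<le> real K - real m - 2"
    if "b \<in> Basis" for b
  proof -
    have "int m + 1 \<le> \<lfloor>?g y b\<rfloor>" "\<lfloor>?g y b\<rfloor> \<le> int K - int m - 2"
      using yb[OF that] by (simp_all add: le_floor_iff floor_le_iff)
    then show "real m + 1 \<le> \<lfloor>?g y b\<rfloor>" "\<lfloor>?g y b\<rfloor> \<le> real K - real m - 2"
      by linarith+
  qed
  ultimately have "y' \<in> grid_core c s K m"
    using p(2) unfolding grid_core_def abs_le_iff by (fastforce simp del: of_int_add)
  with y'(2) show ?thesis by blast
qed

lemma grow_to_cube:
  "y \<in> grid_core c s K m \<Longrightarrow> \<exists>y'\<in>cube c s. exp (real m * N) * \<bar>f y\<bar> \<le> \<bar>f y'\<bar>"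
proof (induction m arbitrary: y)
  case 0
  then show ?case
    using grid_core_0_subset_cube[OF s_pos K_pos] by auto
next
  case (Suc m)
  obtain y1 where y1: "y1 \<in> grid_core c s K m" "exp N * \<bar>f y\<bar> \<le> \<bar>f y1\<bar>"
    using grow_into_grid_core[OF Suc.prems] by blast
  obtain y' where y': "y' \<in> cube c s" "exp (real m * N) * \<bar>f y1\<bar> \<le> \<bar>f y'\<bar>"
    using Suc.IH[OF y1(1)] by blast
  have "exp (real (Suc m) * N) * \<bar>f y\<bar> = exp (real m * N) * (exp N * \<bar>f y\<bar>)"
    by (simp add: distrib_right exp_add)
  also have "\<dots> \<le> exp (real m * N) * \<bar>f y1\<bar>"
    using y1(2) by simp
  also have "\<dots> \<le> \<bar>f y'\<bar>"
    by (rule y'(2))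
  finally show ?case
    using y'(1) by blast
qed

lemma half_cube_doubling_index:
  assumes Q: "cube c s \<subseteq> unit_cube" and K: "K \<ge> 4" and m: "real m < real K / 4"
  shows "real m * N \<le> doubling_index f c (s / 2)"
proof -
  have cont_Q: "continuous_on (cube c s) f"
    using continuous Q by (rule continuous_on_subset)
  have half: "cube c (s / 2) \<subseteq> cube c s"
    using s_pos by (intro cube_subset_cube) simp
  define M where "M = maxabs f (cube c (s / 2))"
  obtain p where p: "p \<in> subcube_centers c s K" "cube p (s / real K) \<subseteq> cube c (s / 2)"
    using subcube_in_half_cube[OF s_pos K] by blast
  have "p \<in> cube p (s / real K)"
    using s_pos by (simp add: center_mem_cube)
  then have "maxabs f (cube p (s / real K)) \<le> M"
    unfolding M_def using p(2) half
    by (intro maxabs_mono compact_cube continuous_on_subset[OF cont_Q]) auto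
  with maxabs_pos p(1) have M: "M > 0" by fastforce
  obtain x where x: "x \<in> cube c (s / 2)" "\<bar>f x\<bar> = M"
    using maxabs_attained[OF compact_cube _ continuous_on_subset[OF cont_Q half]] s_pos
      center_mem_cube[of "s / 2" c] unfolding M_def by fastforce
  obtain y where y: "y \<in> cube c s" "exp (real m * N) * M \<le> \<bar>f y\<bar>"
    using grow_to_cube half_cube_subset_grid_core[OF s_pos K_pos m] x by fastforce
  with abs_le_maxabs[OF compact_cube cont_Q y(1)]
  have growth: "exp (real m * N) * M \<le> maxabs f (cube c s)"
    by linarith
  moreover have "0 < maxabs f (cube c s)"
    using growth M by (smt (verit) exp_gt_zero mult_pos_pos)
  ultimately show ?thesis
    unfolding doubling_index_def M_def[symmetric] using le_ln_div_iff[OF M] by simp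
qed

end

theorem lemma4p1:
  shows "\<exists>N0::real. \<forall>(f :: 'a::euclidean_space \<Rightarrow> real) (c :: 'a) (s :: real) (K :: nat).
     continuous_on unit_cube f \<and> s > 0 \<and> cube c s \<subseteq> unit_cube \<and> K \<ge> 8 \<and>
     (\<forall>p\<in>subcube_centers c s K. cube p (2 * (s / real K)) \<subseteq> unit_cube) \<and>
     (\<forall>p\<in>subcube_centers c s K. maxabs f (cube p (s / real K)) > 0) \<and>
     Min ((\<lambda>p. doubling_index f p (s / real K)) ` subcube_centers c s K) \<ge> N0
     \<longrightarrow> doubling_index f c (s / 2) \<ge>
           real K / 8 * Min ((\<lambda>p. doubling_index f p (s / real K)) ` subcube_centers c s K)"
proof (intro exI[of _ 0] allI impI, elim conjE)
  fix f :: "'a \<Rightarrow> real" and c :: 'a and s :: real and K :: nat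
  define N where "N = Min ((\<lambda>p. doubling_index f p (s / real K)) ` subcube_centers c s K)"
  assume cont: "continuous_on unit_cube f" and s: "s > 0" and Q: "cube c s \<subseteq> unit_cube"
    and K: "K \<ge> 8" and double_subcubes: "\<forall>p\<in>subcube_centers c s K. cube p (2 * (s / real K)) \<subseteq> unit_cube"
    and pos: "\<forall>p\<in>subcube_centers c s K. maxabs f (cube p (s / real K)) > 0"
    and min_nonneg: "0 \<le> Min ((\<lambda>p. doubling_index f p (s / real K)) ` subcube_centers c s K)"
  have "\<forall>p\<in>subcube_centers c s K. N \<le> doubling_index f p (s / real K)"
    unfolding N_def by (simp add: finite_subcube_centers)
  then interpret subcube_doubling f c s K N
    using cont s K double_subcubes pos by unfold_locales auto
  define m where "m = nat \<lceil>real K / 8\<rceil>"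
  have m: "real K / 8 \<le> real m" "real m < real K / 4"
    using K unfolding m_def by linarith+
  have "real K / 8 * N \<le> real m * N"
    using m(1) min_nonneg unfolding N_def[symmetric] by (rule mult_right_mono)
  also have "\<dots> \<le> doubling_index f c (s / 2)"
    using half_cube_doubling_index[OF Q _ m(2)] K by simp
  finally show "real K / 8 * N \<le> doubling_index f c (s / 2)" .
qed

end
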